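(* Let $\pi$ be a block-constructed permutation. Then $\pi$ is transposition Lagrangian.
   Context: Work on $\mathcal{A}=\{1,\dots,d\}$ with $\pi_0=\mathrm{id}$, so $\pi=(\mathrm{id},\pi_1)$ is identified with $\pi_1\in\mathfrak{S}_d$ (position of letter $k$ in the bottom row is $\pi_1(k)$). A permutation is block-constructed if $\pi_1(1)=d$, $\pi_1(d)=1$ (standard), and $\{2,\dots,d-1\}$ is partitioned into consecutive intervals $\{j,\dots,j+n-1\}$ with $n\in\{1,2,3,4,5\}$ on each of which $\pi_1$ reverses the order: $\pi_1(k)=2j+n-1-k$ for $j\le k\le j+n-1$. (These are exactly the standard permutations whose interior is a concatenation of the blocks $\begin{pmatrix}\alpha\\\alpha\end{pmatrix}$, $\begin{pmatrix}\alpha_1\alpha_2\dots\alpha_n\\\alpha_n\dots\alpha_1\end{pmatrix}$ for $n=2,\dots,5$; in particular they are self-inverse.) Define $\Omega=\Omega_\pi$ by $\Omega_{\alpha,\beta}=1$ if $\pi_0(\alpha)<\pi_0(\beta)$ and $\pi_1(\alpha)>\pi_1(\beta)$, $-1$ if $\pi_0(\alpha)>\pi_0(\beta)$ and $\pi_1(\alpha)<\pi_1(\beta)$, $0$ otherwise; $g(\pi)=\tfrac12\mathrm{rank}\,\Omega_\pi$ (the genus). Let $\pi_{\mathcal{A}}=\pi_0^{-1}\circ\pi_1$, $\mathbf{e}_{\mathcal{B}}=\sum_{\alpha\in\mathcal{B}}\mathbf{e}_\alpha$, $\mathbf{v}_{\mathcal{B}}=\Omega\mathbf{e}_{\mathcal{B}}$.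 A self-inverse $\pi$ is transposition Lagrangian if $\dim\mathrm{span}\{\mathbf{v}_{\mathcal{B}}:\mathcal{B}\text{ an orbit of }\pi_{\mathcal{A}},\#\mathcal{B}=2\}=\#\{\text{such orbits}\}=g(\pi)$. *)

theory Defs
  imports "Jordan_Normal_Form.DL_Rank" "HOL-Combinatorics.Orbits" "HOL-Combinatorics.Permutations"
begin

text \<open>Letters are \<open>{1..d}\<close>; a pair \<open>(pi0, pi1)\<close> of bijections \<open>{1..d} \<rightarrow> {1..d}\<close>
  (positions in the top / bottom row).  Matrices and vectors are the
  Jordan_Normal_Form ones over the reals, with row/column index \<open>i\<close> (0-based)
  corresponding to the letter \<open>i+1\<close>.\<close>

definition Omega_entry :: "(nat \<Rightarrow> nat) \<Rightarrow> (nat \<Rightarrow> nat) \<Rightarrow> nat \<Rightarrow> nat \<Rightarrow> real" where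
  "Omega_entry pi0 pi1 a b =
     (if pi0 a < pi0 b \<and> pi1 a > pi1 b then 1
      else if pi0 a > pi0 b \<and> pi1 a < pi1 b then -1 else 0)"

definition Omega_mat :: "nat \<Rightarrow> (nat \<Rightarrow> nat) \<Rightarrow> (nat \<Rightarrow> nat) \<Rightarrow> real mat" where
  "Omega_mat d pi0 pi1 = mat d d (\<lambda>(i, j). Omega_entry pi0 pi1 (i + 1) (j + 1))"

definition genus :: "nat \<Rightarrow> (nat \<Rightarrow> nat) \<Rightarrow> (nat \<Rightarrow> nat) \<Rightarrow> nat" where
  "genus d pi0 pi1 = vec_space.rank d (Omega_mat d pi0 pi1) div 2"

definition e_set :: "nat \<Rightarrow> nat set \<Rightarrow> real vec" where
  "e_set d B = vec d (\<lambda>i. if i + 1 \<in> B then 1 else 0)"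

definition v_set :: "nat \<Rightarrow> (nat \<Rightarrow> nat) \<Rightarrow> (nat \<Rightarrow> nat) \<Rightarrow> nat set \<Rightarrow> real vec" where
  "v_set d pi0 pi1 B = Omega_mat d pi0 pi1 *\<^sub>v e_set d B"

definition (in vec_space) span_dim :: "'a vec set \<Rightarrow> nat" where
  "span_dim S = vectorspace.dim class_ring (span_vs S)"

definition pi_A :: "nat \<Rightarrow> (nat \<Rightarrow> nat) \<Rightarrow> (nat \<Rightarrow> nat) \<Rightarrow> nat \<Rightarrow> nat" where
  "pi_A d pi0 pi1 = inv_into {1..d} pi0 \<circ> pi1"

definition two_orbits :: "nat \<Rightarrow> (nat \<Rightarrow> nat) \<Rightarrow> (nat \<Rightarrow> nat) \<Rightarrow> nat set set" where
  "two_orbits d pi0 pi1 =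
     {B. (\<exists>a\<in>{1..d}. B = orbit (pi_A d pi0 pi1) a) \<and> card B = 2}"

definition self_inverse :: "nat \<Rightarrow> (nat \<Rightarrow> nat) \<Rightarrow> (nat \<Rightarrow> nat) \<Rightarrow> bool" where
  "self_inverse d pi0 pi1 \<longleftrightarrow> (\<forall>a\<in>{1..d}. pi_A d pi0 pi1 (pi_A d pi0 pi1 a) = a)"

definition transposition_lagrangian :: "nat \<Rightarrow> (nat \<Rightarrow> nat) \<Rightarrow> (nat \<Rightarrow> nat) \<Rightarrow> bool" where
  "transposition_lagrangian d pi0 pi1 \<longleftrightarrow>
     self_inverse d pi0 pi1 \<and>
     vec_space.span_dim d (v_set d pi0 pi1 ` two_orbits d pi0 pi1)
       = card (two_orbits d pi0 pi1) \<and>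
     card (two_orbits d pi0 pi1) = genus d pi0 pi1"

fun blocks_ok :: "(nat \<Rightarrow> nat) \<Rightarrow> nat \<Rightarrow> nat list \<Rightarrow> bool" where
  "blocks_ok p j [] = True"
| "blocks_ok p j (n # ns) =
     (n \<in> {1..5} \<and> (\<forall>k\<in>{j..j + n - 1}. p k = 2 * j + n - 1 - k) \<and> blocks_ok p (j + n) ns)"

definition block_constructed :: "nat \<Rightarrow> (nat \<Rightarrow> nat) \<Rightarrow> bool" where
  "block_constructed d pi1 \<longleftrightarrow>
     pi1 permutes {1..d} \<and> pi1 1 = d \<and> pi1 d = 1 \<and>
     (\<exists>ns. {2..<2 + sum_list ns} = {2..d - 1} \<and> blocks_ok pi1 2 ns)"

end

theory Submission
  imports Defs
begin

text \<open>
  Write \<open>\<pi>\<close> for the bottom row. Row \<open>1\<close> of \<open>\<Omega>\<close> is \<open>(0, 1, \<dots>, 1)\<close>, row \<open>d\<close> is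
  \<open>(-1, \<dots>, -1, 0)\<close>, and an interior letter \<open>a\<close> has entry \<open>-1\<close> at \<open>1\<close>, \<open>+1\<close> at \<open>d\<close>, the sign
  \<open>sgn (b - a)\<close> at the letters \<open>b\<close> of its own block, and \<open>0\<close> elsewhere. The sign matrix of a
  block of length \<open>n\<close> is invertible for even \<open>n\<close>, and for odd \<open>n\<close> its kernel is spanned by the
  alternating vector, which does not vanish at the midpoint -- the fixed point of \<open>\<pi>\<close> in
  that block. Hence \<open>\<Omega>\<close> is injective on vectors supported on the letters moved by \<open>\<pi>\<close>, and
  the column of every fixed letter is a combination of columns of moved letters. So the rank
  of \<open>\<Omega>\<close> is the number of moved letters, i.e. twice the number of transpositions of the
  involution \<open>\<pi>\<close>, so the genus is the number of transpositions; and the vectors \<open>v\<^sub>B\<close>, being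
  images of indicator vectors with disjoint supports inside the moved letters, are linearly
  independent.
\<close>

section \<open>Sign matrices of intervals\<close>

lemma sgn_row_difference:
  fixes Y :: "nat \<Rightarrow> real"
  assumes "j \<le> i" "Suc i < m"
  shows "(\<Sum>k\<in>{j..<m}. sgn (real k - real i) * Y k) - (\<Sum>k\<in>{j..<m}. sgn (real k - real (Suc i)) * Y k)
    = Y i + Y (Suc i)"
proof -
  have "(\<Sum>k\<in>{j..<m}. sgn (real k - real i) * Y k) - (\<Sum>k\<in>{j..<m}. sgn (real k - real (Suc i)) * Y k)
      = (\<Sum>k\<in>{j..<m}. (sgn (real k - real i) - sgn (real k - real (Suc i))) * Y k)"
    by (simp add: sum_subtractf left_diff_distrib)
  also have "\<dots> = (\<Sum>k\<in>{i, Suc i}. Y k)"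
    by (rule sum.mono_neutral_cong_right) (use assms in \<open>auto simp: sgn_if\<close>)
  finally show ?thesis by simp
qed

lemma sum_alternating_signs:
  "(\<Sum>k\<in>{j..<m}. (-1::real) ^ (k - j)) = (if even (m - j) then 0 else 1)"
proof (induction m)
  case (Suc m)
  show ?case
  proof (cases "j \<le> m")
    case True
    then have "m - j + 1 = Suc m - j" by simp
    with True Suc show ?thesis by (auto simp: Suc_diff_le)
  qed simp
qed simp

lemma sgn_rows_of_alternating:
  assumes "j \<le> i" "i < m"
  shows "(\<Sum>k\<in>{j..<m}. sgn (real k - real i) * (-1) ^ (k - j)) = (if even (m - j) then -1 else 0)"
  using assms
proof (induction i rule: nat_induct_at_least)
  case base
  have "(\<Sum>k\<in>{j..<m}. sgn (real k - real j) * (-1) ^ (k - j)) = (\<Sum>k\<in>{Suc j..<m}. (-1) ^ (k - j))"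
    by (rule sum.mono_neutral_cong_right) (auto simp: not_less_eq_eq dest: le_antisym)
  also have "\<dots> = - (\<Sum>k\<in>{Suc j..<m}. (-1::real) ^ (k - Suc j))"
    unfolding sum_negf[symmetric] by (intro sum.cong refl) (simp add: Suc_diff_Suc[of j, symmetric])
  finally show ?case using base by (auto simp: sum_alternating_signs)
next
  case (Suc i)
  then show ?case
    using sgn_row_difference[of j i m "\<lambda>k. (-1) ^ (k - j)"] by (simp add: Suc_diff_le)
qed

lemma sgn_block_kernel:
  fixes Y :: "nat \<Rightarrow> real"
  assumes rows: "\<And>i. i \<in> {j..<m} \<Longrightarrow> (\<Sum>k\<in>{j..<m}. sgn (real k - real i) * Y k) = 0"
  shows sgn_block_kernel_alternating: "k \<in> {j..<m} \<Longrightarrow> Y k = (-1) ^ (k - j) * Y j"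
    and sgn_block_kernel_even: "j < m \<Longrightarrow> even (m - j) \<Longrightarrow> Y j = 0"
proof -
  have alternating: "Y k = (-1) ^ (k - j) * Y j" if "j \<le> k" "k < m" for k
    using that
  proof (induction k rule: nat_induct_at_least)
    case (Suc k)
    then have "Y k + Y (Suc k) = 0"
      using sgn_row_difference[of j k m Y] rows[of k] rows[of "Suc k"] by auto
    with Suc show ?case by (simp add: Suc_diff_le)
  qed auto
  show alt: "Y k = (-1) ^ (k - j) * Y j" if "k \<in> {j..<m}" for k
    by (rule alternating) (use that in auto)
  assume "j < m" "even (m - j)"
  have "0 = (\<Sum>k\<in>{j..<m}. sgn (real k - real j) * Y k)" using rows \<open>j < m\<close> by simp
  also have "\<dots> = Y j * (\<Sum>k\<in>{j..<m}. sgn (real k - real j) * (-1) ^ (k - j))"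
    unfolding sum_distrib_left by (intro sum.cong refl) (metis alt mult.commute mult.left_commute)
  also have "\<dots> = - Y j" using sgn_rows_of_alternating[of j j m] \<open>j < m\<close> \<open>even (m - j)\<close> by simp
  finally show "Y j = 0" by simp
qed

section \<open>Block decompositions\<close>

definition reversal_blocks :: "(nat \<Rightarrow> nat) \<Rightarrow> nat set \<Rightarrow> (nat \<Rightarrow> nat) \<Rightarrow> (nat \<Rightarrow> nat) \<Rightarrow> bool" where
  "reversal_blocks p C start len \<longleftrightarrow>
     (\<forall>c\<in>C. c \<in> {start c..<start c + len c} \<and> {start c..<start c + len c} \<subseteq> C \<and>
        (\<forall>k\<in>{start c..<start c + len c}.
           start k = start c \<and> len k = len c \<and> p k = 2 * start c + len c - 1 - k))"

lemma blocks_ok_reversal_blocks: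
  "blocks_ok p j ns \<Longrightarrow> \<exists>start len. reversal_blocks p {j..<j + sum_list ns} start len"
proof (induction ns arbitrary: j)
  case Nil
  show ?case by (simp add: reversal_blocks_def)
next
  case (Cons n ns)
  have reverse: "\<And>k. k \<in> {j..<j + n} \<Longrightarrow> p k = 2 * j + n - 1 - k"
    and "blocks_ok p (j + n) ns"
    using Cons.prems by auto
  then obtain start len where rest: "reversal_blocks p {j + n..<j + n + sum_list ns} start len"
    using Cons.IH by blast
  define start' where "start' c = (if c < j + n then j else start c)" for c
  define len' where "len' c = (if c < j + n then n else len c)" for c
  have "reversal_blocks p {j..<j + sum_list (n # ns)} start' len'"
    unfolding reversal_blocks_def
  proof (intro ballI, goal_cases)
    case (1 c)
    show ?case
    proof (cases "c < j + n")
      case True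
      have "start' k = j" "len' k = n" if "k \<in> {j..<j + n}" for k
        using that by (simp_all add: start'_def len'_def)
      with True 1 reverse show ?thesis by (simp add: start'_def len'_def)
    next
      case False
      with 1 rest have own: "c \<in> {start c..<start c + len c}"
        and block: "{start c..<start c + len c} \<subseteq> {j + n..<j + n + sum_list ns}"
        and inside: "\<forall>k\<in>{start c..<start c + len c}.
                       start k = start c \<and> len k = len c \<and> p k = 2 * start c + len c - 1 - k"
        unfolding reversal_blocks_def by auto
      have same: "start' k = start k" "len' k = len k" if "k \<in> {start c..<start c + len c}" for k
        using block that by (auto simp: start'_def len'_def)
      have "{start c..<start c + len c} \<subseteq> {j..<j + sum_list (n # ns)}"
        using block by auto
      with own inside show ?thesis
        unfolding same[OF own] by (metis same)
    qed
  qed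
  then show ?case by blast
qed

section \<open>Matrices injective on a support\<close>

lemma mult_mat_vec_index_letters:
  assumes "M \<in> carrier_mat nr n" "x \<in> carrier_vec n" "i < nr"
  shows "(M *\<^sub>v x) $ i = (\<Sum>b\<in>{1..n}. M $$ (i, b - 1) * x $ (b - 1))"
proof -
  have "(M *\<^sub>v x) $ i = (\<Sum>k<n. M $$ (i, k) * x $ k)"
    using assms by (simp add: scalar_prod_def atLeast0LessThan)
  also have "\<dots> = (\<Sum>b\<in>{1..n}. M $$ (i, b - 1) * x $ (b - 1))"
    by (rule sum.reindex_bij_witness[of _ "\<lambda>b. b - 1" Suc]) auto
  finally show ?thesis .
qed

lemma mult_mat_vec_e_set_singleton:
  assumes "M \<in> carrier_mat nr n" "b \<in> {1..n}"
  shows "M *\<^sub>v e_set n {b} = col M (b - 1)"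
proof (rule eq_vecI)
  fix i assume "i < dim_vec (col M (b - 1))"
  then have i: "i < nr" using assms(1) by simp
  have "(M *\<^sub>v e_set n {b}) $ i = (\<Sum>c\<in>{1..n}. M $$ (i, c - 1) * e_set n {b} $ (c - 1))"
    using mult_mat_vec_index_letters[OF assms(1) _ i] by (simp add: e_set_def)
  also have "\<dots> = (\<Sum>c\<in>{1..n}. if c = b then M $$ (i, c - 1) else 0)"
    by (intro sum.cong refl) (auto simp: e_set_def)
  also have "\<dots> = col M (b - 1) $ i"
    using assms i by (auto simp: carrier_matD)
  finally show "(M *\<^sub>v e_set n {b}) $ i = col M (b - 1) $ i" .
qed (use assms in simp)

locale real_vec_space = vec_space "TYPE(real)" n for n :: nat

definition inj_on_supported :: "nat \<Rightarrow> real mat \<Rightarrow> nat set \<Rightarrow> bool" where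
  "inj_on_supported n M S \<longleftrightarrow>
     (\<forall>x\<in>carrier_vec n. M *\<^sub>v x = 0\<^sub>v n \<longrightarrow> (\<forall>b\<in>{1..n} - S. x $ (b - 1) = 0) \<longrightarrow> x = 0\<^sub>v n)"

lemma inj_on_supportedD:
  "inj_on_supported n M S \<Longrightarrow> x \<in> carrier_vec n \<Longrightarrow> M *\<^sub>v x = 0\<^sub>v n \<Longrightarrow>
    (\<And>b. b \<in> {1..n} - S \<Longrightarrow> x $ (b - 1) = 0) \<Longrightarrow> x = 0\<^sub>v n"
  unfolding inj_on_supported_def by blast

lemma mult_e_sets_combination_zero:
  fixes M :: "real mat" and c :: "'i \<Rightarrow> real"
  assumes M: "M \<in> carrier_mat n n"
    and inj_S: "inj_on_supported n M S"
    and I: "finite I" "\<And>i. i \<in> I \<Longrightarrow> B i \<noteq> {} \<and> B i \<subseteq> S" "S \<subseteq> {1..n}" "disjoint_family_on B I"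
    and comb: "\<And>r. r < n \<Longrightarrow> (\<Sum>i\<in>I. c i * (M *\<^sub>v e_set n (B i)) $ r) = 0"
    and i: "i \<in> I"
  shows "c i = 0"
proof -
  define x where "x = vec n (\<lambda>k. \<Sum>i\<in>I. c i * e_set n (B i) $ k)"
  have Mx: "M *\<^sub>v x = 0\<^sub>v n"
  proof (rule eq_vecI)
    fix r assume "r < dim_vec (0\<^sub>v n)"
    then have r: "r < n" by simp
    have "(M *\<^sub>v x) $ r = (\<Sum>k<n. M $$ (r, k) * (\<Sum>i\<in>I. c i * e_set n (B i) $ k))"
      using M r by (simp add: x_def scalar_prod_def atLeast0LessThan)
    also have "\<dots> = (\<Sum>k<n. \<Sum>i\<in>I. c i * (M $$ (r, k) * e_set n (B i) $ k))"
      by (simp add: sum_distrib_left mult.left_commute)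
    also have "\<dots> = (\<Sum>i\<in>I. c i * (\<Sum>k<n. M $$ (r, k) * e_set n (B i) $ k))"
      by (subst sum.swap) (simp add: sum_distrib_left)
    also have "\<dots> = (\<Sum>i\<in>I. c i * (M *\<^sub>v e_set n (B i)) $ r)"
      using M r by (simp add: scalar_prod_def atLeast0LessThan e_set_def)
    finally show "(M *\<^sub>v x) $ r = 0\<^sub>v n $ r" using comb r by simp
  qed (use M in \<open>simp add: x_def\<close>)
  have outside: "x $ (b - 1) = 0" if "b \<in> {1..n} - S" for b
    using I(2) that by (fastforce simp: x_def e_set_def intro!: sum.neutral)
  have x0: "x = 0\<^sub>v n"
    by (rule inj_on_supportedD[OF inj_S _ Mx outside]) (simp add: x_def)
  obtain b where b: "b \<in> B i" using I(2) i by blast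
  with I(2,3) i have "b \<in> {1..n}" by blast
  then have bn: "b - 1 < n" "b - 1 + 1 = b" by auto
  have "b \<notin> B i'" if "i' \<in> I" "i' \<noteq> i" for i'
    using I(4) b i that unfolding disjoint_family_on_def by blast
  then have "x $ (b - 1) = (\<Sum>i'\<in>I. if i' = i then c i' else 0)"
    unfolding x_def using bn b by (auto simp: e_set_def intro!: sum.cong)
  also have "\<dots> = c i" using I(1) i by simp
  finally show ?thesis using x0 bn by simp
qed

lemma (in real_vec_space) lin_indpt_mult_e_sets:
  assumes M: "M \<in> carrier_mat n n"
    and inj_S: "inj_on_supported n M S"
    and I: "finite I" "\<And>i. i \<in> I \<Longrightarrow> B i \<noteq> {} \<and> B i \<subseteq> S" "S \<subseteq> {1..n}" "disjoint_family_on B I"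
  shows "inj_on (\<lambda>i. M *\<^sub>v e_set n (B i)) I" and "lin_indpt ((\<lambda>i. M *\<^sub>v e_set n (B i)) ` I)"
proof -
  let ?v = "\<lambda>i. M *\<^sub>v e_set n (B i)"
  have carrier: "?v ` I \<subseteq> carrier_vec n"
    using M by (auto simp: e_set_def)
  show inj: "inj_on ?v I"
  proof (rule inj_onI, rule ccontr)
    fix i i' assume ii': "i \<in> I" "i' \<in> I" "?v i = ?v i'" "i \<noteq> i'"
    have disj: "disjoint_family_on B {i, i'}"
      using ii' by (intro disjoint_family_on_mono[OF _ I(4)]) simp
    have comb: "(\<Sum>k\<in>{i, i'}. (if k = i then 1 else -1) * ?v k $ r) = 0" for r
      using ii' by simp
    have "(\<lambda>k. if k = i then 1 else -1 :: real) i = 0"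
      by (rule mult_e_sets_combination_zero[OF M inj_S _ _ I(3) disj comb]) (use ii' I(2) in auto)
    then show False by simp
  qed
  show "lin_indpt (?v ` I)"
  proof (rule finite_lin_indpt2, goal_cases)
    case (3 a)
    then have lc: "lincomb a (?v ` I) = 0\<^sub>v n" by simp
    have comb: "(\<Sum>i\<in>I. a (?v i) * ?v i $ r) = 0" if "r < n" for r
    proof -
      have "(\<Sum>i\<in>I. a (?v i) * ?v i $ r) = (\<Sum>u\<in>?v ` I. a u * u $ r)"
        by (simp add: sum.reindex[OF inj])
      also have "\<dots> = lincomb a (?v ` I) $ r"
        by (rule lincomb_index[OF that carrier, symmetric])
      finally show ?thesis using lc that by simp
    qed
    have "a (?v i) = 0" if "i \<in> I" for i
      using mult_e_sets_combination_zero[OF M inj_S I comb that] .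
    then show ?case by (simp add: class_ring_simps)
  qed (use I(1) carrier in auto)
qed

lemma (in real_vec_space) col_in_span_of_kernel_vector:
  assumes M: "M \<in> carrier_mat n n" and S: "S \<subseteq> {1..n}" and a: "a \<in> {1..n} - S"
    and inj: "inj_on (\<lambda>b. col M (b - 1)) S"
    and y: "y \<in> carrier_vec n" "M *\<^sub>v y = 0\<^sub>v n" "y $ (a - 1) = 1" "\<forall>b\<in>{1..n} - S - {a}. y $ (b - 1) = 0"
  shows "col M (a - 1) \<in> span ((\<lambda>b. col M (b - 1)) ` S)"
proof -
  let ?col = "\<lambda>b. col M (b - 1)"
  have finS: "finite S" using S finite_subset by blast
  have carrier: "?col ` S \<subseteq> carrier_vec n" using M S by auto
  define c where "c u = - y $ (the_inv_into S ?col u - 1)" for u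
  have "lincomb c (?col ` S) = ?col a"
  proof (rule eq_vecI)
    fix r assume "r < dim_vec (?col a)"
    then have r: "r < n" using M by simp
    have "0 = (\<Sum>b\<in>{1..n}. M $$ (r, b - 1) * y $ (b - 1))"
      using mult_mat_vec_index_letters[OF M y(1) r] y(2) r by simp
    also have "\<dots> = (\<Sum>b\<in>insert a S. M $$ (r, b - 1) * y $ (b - 1))"
      by (rule sum.mono_neutral_right) (use a S y(4) in auto)
    also have "\<dots> = M $$ (r, a - 1) + (\<Sum>b\<in>S. M $$ (r, b - 1) * y $ (b - 1))"
      using a finS y(3) by simp
    moreover have "?col a $ r = M $$ (r, a - 1)"
      using M r a by auto
    ultimately have "?col a $ r = - (\<Sum>b\<in>S. M $$ (r, b - 1) * y $ (b - 1))"
      by (simp add: eq_neg_iff_add_eq_0)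
    also have "\<dots> = (\<Sum>b\<in>S. c (?col b) * ?col b $ r)"
      unfolding sum_negf[symmetric]
    proof (rule sum.cong)
      fix b assume "b \<in> S"
      then have "the_inv_into S ?col (?col b) = b"
        by (rule the_inv_into_f_f[OF inj])
      moreover have "b - 1 < n" using subsetD[OF S \<open>b \<in> S\<close>] by auto
      ultimately show "- (M $$ (r, b - 1) * y $ (b - 1)) = c (?col b) * ?col b $ r"
        using M r by (simp add: c_def)
    qed simp
    also have "\<dots> = (\<Sum>u\<in>?col ` S. c u * u $ r)"
      using sum.reindex[OF inj, of "\<lambda>u. c u * u $ r"] by (simp only: comp_def)
    also have "\<dots> = lincomb c (?col ` S) $ r"
      by (rule lincomb_index[OF r carrier, symmetric])
    finally show "lincomb c (?col ` S) $ r = ?col a $ r" ..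
  qed (use M carrier in simp)
  then show ?thesis
    unfolding finite_span[OF finite_imageI[OF finS] carrier] by (auto intro!: exI[of _ c])
qed

lemma (in vec_space) dim_span_lin_indpt:
  assumes "U \<subseteq> carrier_vec n" "finite U" "lin_indpt U"
  shows "vectorspace.dim class_ring (span_vs U) = card U"
  by (rule dim_span[OF assms(1,2)]) (use assms(3) in \<open>auto simp: maximal_def\<close>)

lemma set_cols_letters: "M \<in> carrier_mat nr n \<Longrightarrow> set (cols M) = (\<lambda>b. col M (b - 1)) ` {1..n}"
  unfolding image_Suc_lessThan[symmetric] image_image by (auto simp: cols_def)

lemma (in real_vec_space) lin_indpt_cols_support:
  assumes M: "M \<in> carrier_mat n n" and S: "S \<subseteq> {1..n}" and inj_S: "inj_on_supported n M S"
  shows "inj_on (\<lambda>b. col M (b - 1)) S" and "lin_indpt ((\<lambda>b. col M (b - 1)) ` S)"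
proof -
  have "finite S" using S finite_subset by blast
  then have "inj_on (\<lambda>b. M *\<^sub>v e_set n {b}) S" "lin_indpt ((\<lambda>b. M *\<^sub>v e_set n {b}) ` S)"
    using lin_indpt_mult_e_sets[OF M inj_S _ _ S, where B = "\<lambda>b. {b}"]
    by (auto simp: disjoint_family_on_def)
  moreover have "M *\<^sub>v e_set n {b} = col M (b - 1)" if "b \<in> S" for b
    using mult_mat_vec_e_set_singleton[OF M] S that by auto
  ultimately show "inj_on (\<lambda>b. col M (b - 1)) S" and "lin_indpt ((\<lambda>b. col M (b - 1)) ` S)"
    by (simp_all cong: inj_on_cong image_cong)
qed

lemma (in real_vec_space) rank_eq_card_support:
  assumes M: "M \<in> carrier_mat n n" and S: "S \<subseteq> {1..n}" and inj_S: "inj_on_supported n M S"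
    and kernel: "\<And>a. a \<in> {1..n} - S \<Longrightarrow>
      \<exists>y\<in>carrier_vec n. M *\<^sub>v y = 0\<^sub>v n \<and> y $ (a - 1) = 1 \<and> (\<forall>b\<in>{1..n} - S - {a}. y $ (b - 1) = 0)"
  shows "rank M = card S"
proof -
  let ?col = "\<lambda>b. col M (b - 1)"
  note inj = lin_indpt_cols_support(1)[OF M S inj_S]
  have carrier: "?col ` S \<subseteq> carrier_vec n" using M S by auto
  have "set (cols M) \<subseteq> span (?col ` S)"
  proof
    fix u assume "u \<in> set (cols M)"
    then obtain a where a: "a \<in> {1..n}" and u: "u = ?col a"
      using set_cols_letters[OF M] by blast
    show "u \<in> span (?col ` S)"
    proof (cases "a \<in> S")
      case True
      then show ?thesis using u in_own_span[OF carrier] by blast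
    next
      case False
      with a kernel obtain y where "y \<in> carrier_vec n" "M *\<^sub>v y = 0\<^sub>v n" "y $ (a - 1) = 1"
        "\<forall>b\<in>{1..n} - S - {a}. y $ (b - 1) = 0" by blast
      with False a show ?thesis
        using col_in_span_of_kernel_vector[OF M S _ inj] u by blast
    qed
  qed
  then have "span (set (cols M)) \<subseteq> span (?col ` S)"
    by (rule span_is_subset[OF _ span_is_submodule[OF carrier]])
  moreover have "span (?col ` S) \<subseteq> span (set (cols M))"
    by (rule span_is_monotone) (use set_cols_letters[OF M] S in auto)
  ultimately have "rank M = vectorspace.dim class_ring (span_vs (?col ` S))"
    by (simp add: rank_def)
  also have "\<dots> = card S"
    using dim_span_lin_indpt[OF carrier _ lin_indpt_cols_support(2)[OF M S inj_S]] card_image[OF inj] S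
    by (simp add: finite_subset)
  finally show ?thesis .
qed

section \<open>The matrix \<open>\<Omega>\<close> of a block-constructed permutation\<close>

lemma Omega_entry_antisym: "Omega_entry pi0 pi1 b a = - Omega_entry pi0 pi1 a b"
  by (auto simp: Omega_entry_def)

lemma disjoint_intervals_ordered:
  fixes a b :: nat
  assumes "{s..<e} \<inter> {s'..<e'} = {}" "a \<in> {s..<e}" "b \<in> {s'..<e'}" "a < b"
  shows "e \<le> s'"
proof (rule ccontr)
  assume "\<not> e \<le> s'"
  then have "max s s' \<in> {s..<e} \<inter> {s'..<e'}" using assms(2-4) by auto
  with assms(1) show False by blast
qed

locale block_permutation = real_vec_space d for d :: nat +
  fixes p start len :: "nat \<Rightarrow> nat"
  assumes permutes: "p permutes {1..d}"
    and first: "p 1 = d" and last: "p d = 1"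
    and blocks: "reversal_blocks p {2..<d} start len"
begin

abbreviation block :: "nat \<Rightarrow> nat set" where
  "block c \<equiv> {start c..<start c + len c}"

abbreviation omega :: "nat \<Rightarrow> nat \<Rightarrow> real" where
  "omega a b \<equiv> Omega_entry id p a b"

lemma dim_pos: "1 \<le> d"
proof (rule ccontr)
  assume "\<not> 1 \<le> d"
  then have "p = id" using permutes by (simp add: permutes_empty)
  with first \<open>\<not> 1 \<le> d\<close> show False by simp
qed

lemma p_in: "a \<in> {1..d} \<Longrightarrow> p a \<in> {1..d}"
  using permutes_in_image[OF permutes] by simp

lemma p_eq_iff: "p a = p b \<longleftrightarrow> a = b"
  using permutes_inj[OF permutes] by (simp add: inj_eq)

lemma block_props:
  assumes "c \<in> {2..<d}"
  shows mem_block: "c \<in> block c"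
    and block_subset: "block c \<subseteq> {2..<d}"
    and block_start_len: "k \<in> block c \<Longrightarrow> start k = start c \<and> len k = len c"
    and p_block: "k \<in> block c \<Longrightarrow> p k = 2 * start c + len c - 1 - k"
  using blocks assms unfolding reversal_blocks_def by blast+

lemma block_eq: "c \<in> {2..<d} \<Longrightarrow> k \<in> block c \<Longrightarrow> block k = block c"
  by (drule (1) block_start_len) simp

lemma p_in_block: "c \<in> {2..<d} \<Longrightarrow> p c \<in> block c"
  using mem_block[of c] by (auto simp: p_block)

lemma p_involution: "a \<in> {1..d} \<Longrightarrow> p (p a) = a"
proof -
  assume a: "a \<in> {1..d}"
  consider "a = 1" | "a = d" | "a \<in> {2..<d}" using a by fastforce
  then show "p (p a) = a"
  proof cases
    case 3
    have "p (p a) = 2 * start a + len a - 1 - p a"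
      by (rule p_block[OF 3 p_in_block[OF 3]])
    with mem_block[OF 3] p_block[OF 3 mem_block[OF 3]] show ?thesis by simp
  qed (use first last in simp_all)
qed

lemma blocks_disjoint:
  assumes a: "a \<in> {2..<d}" and b: "b \<in> {2..<d}" and ab: "b \<notin> block a"
  shows "block a \<inter> block b = {}"
proof (rule ccontr)
  assume "block a \<inter> block b \<noteq> {}"
  then obtain x where "x \<in> block a" "x \<in> block b" by blast
  then have "block a = block b" using block_eq[OF a] block_eq[OF b] by metis
  with ab mem_block[OF b] show False by simp
qed

lemma omega_first_row: "b \<in> {2..d} \<Longrightarrow> omega 1 b = 1"
  using p_in[of b] p_eq_iff[of b 1] first by (auto simp: Omega_entry_def)

lemma omega_last_row: "b \<in> {1..<d} \<Longrightarrow> omega d b = -1"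
  using p_in[of b] p_eq_iff[of b d] last by (auto simp: Omega_entry_def)

lemma omega_same_block:
  assumes a: "a \<in> {2..<d}" and b: "b \<in> block a"
  shows "omega a b = sgn (real b - real a)"
proof -
  have "p a = 2 * start a + len a - 1 - a" "p b = 2 * start a + len a - 1 - b"
    using p_block[OF a mem_block[OF a]] p_block[OF a b] by simp_all
  with mem_block[OF a] b have "p b < p a \<longleftrightarrow> a < b" "p a < p b \<longleftrightarrow> b < a"
    by auto
  then show ?thesis by (auto simp: Omega_entry_def sgn_if)
qed

lemma p_increasing_across_blocks:
  assumes a: "a \<in> {2..<d}" and b: "b \<in> {2..<d}" and ab: "b \<notin> block a" "a < b"
  shows "p a < p b"
proof -
  have "start a + len a \<le> start b"
    by (rule disjoint_intervals_ordered[OF blocks_disjoint[OF a b ab(1)] mem_block[OF a] mem_block[OF b] ab(2)])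
  moreover have "p a < start a + len a" "start b \<le> p b"
    using p_in_block[OF a] p_in_block[OF b] by simp_all
  ultimately show ?thesis by linarith
qed

lemma omega_other_block:
  assumes a: "a \<in> {2..<d}" and b: "b \<in> {2..<d}" and ab: "b \<notin> block a"
  shows "omega a b = 0"
proof -
  have ba: "a \<notin> block b"
  proof
    assume "a \<in> block b"
    then have "block a = block b" by (rule block_eq[OF b])
    with ab mem_block[OF b] show False by simp
  qed
  have "a \<noteq> b" using mem_block[OF a] ab by blast
  then consider "a < b" | "b < a" by linarith
  then show ?thesis
  proof cases
    case 1
    with p_increasing_across_blocks[OF a b ab 1] show ?thesis by (simp add: Omega_entry_def)
  next
    case 2
    with p_increasing_across_blocks[OF b a ba 2] show ?thesis by (simp add: Omega_entry_def)
  qed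
qed

definition Omega_mult :: "(nat \<Rightarrow> real) \<Rightarrow> nat \<Rightarrow> real" where
  "Omega_mult X a = (\<Sum>b\<in>{1..d}. omega a b * X b)"

lemma Omega_mult_first: "Omega_mult X 1 = (\<Sum>b\<in>{2..d}. X b)"
proof -
  have "{1..d} = insert 1 {2..d}" using dim_pos by auto
  then have "Omega_mult X 1 = omega 1 1 * X 1 + (\<Sum>b\<in>{2..d}. omega 1 b * X b)"
    by (simp add: Omega_mult_def)
  also have "\<dots> = (\<Sum>b\<in>{2..d}. X b)"
    using omega_first_row by (simp add: Omega_entry_def)
  finally show ?thesis .
qed

lemma Omega_mult_last: "Omega_mult X d = - (\<Sum>b\<in>{1..<d}. X b)"
proof -
  have "{1..d} = insert d {1..<d}" using dim_pos by auto
  then have "Omega_mult X d = omega d d * X d + (\<Sum>b\<in>{1..<d}. omega d b * X b)"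
    by (simp add: Omega_mult_def)
  also have "\<dots> = - (\<Sum>b\<in>{1..<d}. X b)"
    using omega_last_row by (simp add: Omega_entry_def sum_negf)
  finally show ?thesis .
qed

lemma Omega_mult_interior:
  assumes a: "a \<in> {2..<d}"
  shows "Omega_mult X a = X d - X 1 + (\<Sum>b\<in>block a. sgn (real b - real a) * X b)"
proof -
  have "{1..d} = insert 1 (insert d {2..<d})" using a by auto
  moreover have "omega a 1 = - omega 1 a" "omega a d = - omega d a"
    by (rule Omega_entry_antisym)+
  moreover have "omega 1 a = 1" "omega d a = -1"
    using a omega_first_row[of a] omega_last_row[of a] by simp_all
  moreover have "(\<Sum>b\<in>{2..<d}. omega a b * X b) = (\<Sum>b\<in>block a. sgn (real b - real a) * X b)"
    using block_subset[OF a] omega_other_block[OF a] omega_same_block[OF a]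
    by (intro sum.mono_neutral_cong_right) auto
  ultimately show ?thesis
    using a by (simp add: Omega_mult_def)
qed

lemma sum_first_row_split: "2 \<le> d \<Longrightarrow> (\<Sum>b\<in>{2..d}. X b) = (\<Sum>b\<in>{2..<d}. X b) + X d"
  by (simp add: atLeastLessThanSuc_atLeastAtMost[symmetric] del: atLeastLessThanSuc_atLeastAtMost)

lemma sum_last_row_split: "2 \<le> d \<Longrightarrow> (\<Sum>b\<in>{1..<d}. X b) = X 1 + (\<Sum>b\<in>{2..<d}. X b)"
  by (simp add: sum.atLeast_Suc_lessThan numeral_2_eq_2)

lemma Omega_kernel_interior:
  assumes rows: "\<And>r. r \<in> {1..d} \<Longrightarrow> Omega_mult X r = 0"
    and fixed: "\<And>b. b \<in> {1..d} \<Longrightarrow> p b = b \<Longrightarrow> X b = 0"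
    and ends: "X 1 = X d" and c: "c \<in> {2..<d}"
  shows "X c = 0"
proof -
  define j m where "j = start c" and "m = start c + len c"
  have block_c: "block c = {j..<m}" by (simp add: j_def m_def)
  have block_rows: "(\<Sum>k\<in>{j..<m}. sgn (real k - real i) * X k) = 0" if i: "i \<in> {j..<m}" for i
  proof -
    have "i \<in> {2..<d}" using block_subset[OF c] i block_c by blast
    moreover have "block i = {j..<m}" using block_eq[OF c] i block_c by simp
    ultimately show ?thesis using Omega_mult_interior[of i X] rows[of i] ends by simp
  qed
  have "X j = 0"
  proof (cases "even (m - j)")
    case True
    with mem_block[OF c] show ?thesis
      using sgn_block_kernel_even[OF block_rows] block_c by fastforce
  next
    case False
    define q where "q = j + (m - j) div 2"
    have q: "q \<in> block c" using mem_block[OF c] block_c by (auto simp: q_def)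
    have "p q = q"
      using p_block[OF c q] False by (auto simp: q_def j_def m_def elim!: oddE)
    then have "X q = 0" using fixed q block_subset[OF c] by auto
    then show ?thesis
      using sgn_block_kernel_alternating[OF block_rows, of q] q block_c by simp
  qed
  then show ?thesis
    using sgn_block_kernel_alternating[OF block_rows, of c] mem_block[OF c] block_c by simp
qed

lemma Omega_kernel_trivial:
  assumes rows: "\<And>r. r \<in> {1..d} \<Longrightarrow> Omega_mult X r = 0"
    and fixed: "\<And>b. b \<in> {1..d} \<Longrightarrow> p b = b \<Longrightarrow> X b = 0"
    and a: "a \<in> {1..d}"
  shows "X a = 0"
proof (cases "d = 1")
  case True
  with a first fixed show ?thesis by auto
next
  case False
  then have d: "2 \<le> d" using dim_pos by simp
  have "(\<Sum>b\<in>{2..d}. X b) = 0" "(\<Sum>b\<in>{1..<d}. X b) = 0"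
    using rows[of 1] rows[of d] dim_pos Omega_mult_first[of X] Omega_mult_last[of X] by auto
  then have "(\<Sum>b\<in>{2..<d}. X b) + X d = 0" "X 1 + (\<Sum>b\<in>{2..<d}. X b) = 0"
    using sum_first_row_split[OF d, of X] sum_last_row_split[OF d, of X] by linarith+
  then have ends: "X 1 = X d" by simp
  have interior: "X c = 0" if "c \<in> {2..<d}" for c
    using Omega_kernel_interior[OF rows fixed ends that] .
  with \<open>(\<Sum>b\<in>{2..<d}. X b) + X d = 0\<close> ends have "X 1 = 0" "X d = 0" by simp_all
  consider "a = 1" | "a = d" | "a \<in> {2..<d}" using a by fastforce
  then show ?thesis using interior \<open>X 1 = 0\<close> \<open>X d = 0\<close> by cases simp_all
qed

lemma fixed_point_interior: "a \<in> {1..d} \<Longrightarrow> p a = a \<Longrightarrow> d \<noteq> 1 \<Longrightarrow> a \<in> {2..<d}"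
  using first last by (cases "a = 1 \<or> a = d") auto

lemma fixed_point_centre:
  assumes a: "a \<in> {2..<d}" "p a = a"
  shows "2 * a + 1 = 2 * start a + len a"
proof -
  have "start a \<le> a" "a < start a + len a" using mem_block[OF a(1)] by simp_all
  with p_block[OF a(1) mem_block[OF a(1)]] a(2) show ?thesis by linarith
qed

lemma fixed_point_block_odd: "a \<in> {2..<d} \<Longrightarrow> p a = a \<Longrightarrow> odd (len a)"
  by (drule (1) fixed_point_centre) presburger

lemma fixed_point_unique_in_block:
  assumes a: "a \<in> {2..<d}" "p a = a" and b: "b \<in> block a"
  shows "p b = b \<longleftrightarrow> b = a"
  using p_block[OF a(1) b] fixed_point_centre[OF a] b by auto

text \<open>The alternating vector on the block of the fixed point \<open>a\<close>, normalised to \<open>1\<close> at \<open>a\<close>;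
  the entries at \<open>1\<close> and \<open>d\<close> cancel its block sum in rows \<open>1\<close> and \<open>d\<close>.\<close>

definition kernel_vector :: "nat \<Rightarrow> nat \<Rightarrow> real" where
  "kernel_vector a b =
     (if b = 1 \<or> b = d then - ((-1) ^ (a - start a))
      else if b \<in> block a then (-1) ^ (a - start a) * (-1) ^ (b - start a) else 0)"

lemma sum_interior_kernel_vector:
  assumes a: "a \<in> {2..<d}" "p a = a"
  shows "(\<Sum>b\<in>{2..<d}. kernel_vector a b) = (-1) ^ (a - start a)"
proof -
  have "(\<Sum>b\<in>{2..<d}. kernel_vector a b) = (\<Sum>b\<in>block a. kernel_vector a b)"
    using block_subset[OF a(1)] by (intro sum.mono_neutral_right) (auto simp: kernel_vector_def)
  also have "\<dots> = (-1) ^ (a - start a) * (\<Sum>b\<in>block a. (-1) ^ (b - start a))"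
    using block_subset[OF a(1)] by (auto simp: kernel_vector_def sum_distrib_left intro!: sum.cong)
  also have "\<dots> = (-1) ^ (a - start a)"
    using fixed_point_block_odd[OF a] by (simp add: sum_alternating_signs)
  finally show ?thesis .
qed

lemma Omega_mult_kernel_vector:
  assumes a: "a \<in> {2..<d}" "p a = a" and r: "r \<in> {1..d}"
  shows "Omega_mult (kernel_vector a) r = 0"
proof -
  define s :: real where "s = (-1) ^ (a - start a)"
  let ?Y = "kernel_vector a"
  have d: "2 \<le> d" using a by simp
  have Y_block: "?Y b = s * (-1) ^ (b - start a)" if "b \<in> block a" for b
    using that block_subset[OF a(1)] by (auto simp: kernel_vector_def s_def)
  have Y_ends: "?Y 1 = - s" "?Y d = - s" by (simp_all add: kernel_vector_def s_def)
  have interior_sum: "(\<Sum>b\<in>{2..<d}. ?Y b) = s"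
    unfolding s_def by (rule sum_interior_kernel_vector[OF a])
  consider "r = 1" | "r = d" | "r \<in> {2..<d}" using r by fastforce
  then show ?thesis
  proof cases
    case 1
    then show ?thesis
      using Omega_mult_first[of ?Y] sum_first_row_split[OF d, of ?Y] interior_sum Y_ends by simp
  next
    case 2
    then show ?thesis
      using Omega_mult_last[of ?Y] sum_last_row_split[OF d, of ?Y] interior_sum Y_ends by simp
  next
    case 3
    show ?thesis
    proof (cases "r \<in> block a")
      case True
      then have "block r = block a" using block_eq[OF a(1)] by simp
      then have "Omega_mult ?Y r = s * (\<Sum>b\<in>block a. sgn (real b - real r) * (-1) ^ (b - start a))"
        using Omega_mult_interior[OF 3] Y_ends by (simp add: Y_block sum_distrib_left mult_ac)
      with True fixed_point_block_odd[OF a] show ?thesis by (simp add: sgn_rows_of_alternating)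
    next
      case False
      then have "?Y b = 0" if "b \<in> block r" for b
        using that blocks_disjoint[OF a(1) 3] block_subset[OF 3] by (auto simp: kernel_vector_def)
      then show ?thesis using Omega_mult_interior[OF 3] Y_ends by simp
    qed
  qed
qed

lemma Omega_kernel_vector:
  assumes a: "a \<in> {1..d}" "p a = a"
  obtains Y where "\<And>r. r \<in> {1..d} \<Longrightarrow> Omega_mult Y r = 0" and "Y a = 1"
    and "\<And>b. b \<in> {1..d} \<Longrightarrow> p b = b \<Longrightarrow> b \<noteq> a \<Longrightarrow> Y b = 0"
proof (cases "d = 1")
  case True
  then have one: "{1..d} = {1}" by simp
  have "Omega_mult (\<lambda>_. 1) r = 0" if "r \<in> {1..d}" for r
    using that unfolding Omega_mult_def one by (simp add: Omega_entry_def)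
  moreover have "b = a" if "b \<in> {1..d}" for b
    using that a(1) unfolding one by simp
  ultimately show ?thesis
    using that[of "\<lambda>_. 1"] by blast
next
  case False
  with a have a_int: "a \<in> {2..<d}" by (rule fixed_point_interior)
  have "kernel_vector a a = 1"
    using mem_block[OF a_int] a_int by (simp add: kernel_vector_def power_mult_distrib[symmetric])
  moreover have "kernel_vector a b = 0" if "b \<in> {1..d}" "p b = b" "b \<noteq> a" for b
    using that fixed_point_unique_in_block[OF a_int a(2), of b] first last False
    by (auto simp: kernel_vector_def)
  ultimately show ?thesis
    using that Omega_mult_kernel_vector[OF a_int a(2)] by blast
qed

abbreviation moved :: "nat set" where
  "moved \<equiv> {a \<in> {1..d}. p a \<noteq> a}"

lemma Omega_mat_carrier: "Omega_mat d id p \<in> carrier_mat d d"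
  by (simp add: Omega_mat_def)

lemma Omega_mat_mult_vec:
  assumes x: "x \<in> carrier_vec d" and a: "a \<in> {1..d}"
  shows "(Omega_mat d id p *\<^sub>v x) $ (a - 1) = Omega_mult (\<lambda>b. x $ (b - 1)) a"
proof -
  have "(Omega_mat d id p *\<^sub>v x) $ (a - 1) = (\<Sum>b\<in>{1..d}. Omega_mat d id p $$ (a - 1, b - 1) * x $ (b - 1))"
    using a by (intro mult_mat_vec_index_letters[OF Omega_mat_carrier x]) auto
  also have "\<dots> = Omega_mult (\<lambda>b. x $ (b - 1)) a"
    unfolding Omega_mult_def using a by (intro sum.cong refl) (auto simp: Omega_mat_def)
  finally show ?thesis .
qed

lemma Omega_mat_inj_on_supported_moved: "inj_on_supported d (Omega_mat d id p) moved"
  unfolding inj_on_supported_def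
proof (intro ballI impI)
  fix x assume x: "x \<in> carrier_vec d" and zero: "Omega_mat d id p *\<^sub>v x = 0\<^sub>v d"
    and fixed: "\<forall>b\<in>{1..d} - moved. x $ (b - 1) = 0"
  have rows: "Omega_mult (\<lambda>b. x $ (b - 1)) r = 0" if "r \<in> {1..d}" for r
  proof -
    have "r - 1 < d" using that by auto
    then show ?thesis using Omega_mat_mult_vec[OF x that] zero by simp
  qed
  have vanish: "x $ (a - 1) = 0" if "a \<in> {1..d}" for a
    by (rule Omega_kernel_trivial[OF rows _ that]) (use fixed in auto)
  show "x = 0\<^sub>v d"
  proof (rule eq_vecI)
    fix i assume "i < dim_vec (0\<^sub>v d)"
    then show "x $ i = 0\<^sub>v d $ i" using vanish[of "i + 1"] by simp
  qed (use x in simp)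
qed

lemma Omega_mat_kernel_vector:
  assumes a: "a \<in> {1..d} - moved"
  shows "\<exists>y\<in>carrier_vec d. Omega_mat d id p *\<^sub>v y = 0\<^sub>v d \<and> y $ (a - 1) = 1 \<and>
    (\<forall>b\<in>{1..d} - moved - {a}. y $ (b - 1) = 0)"
proof -
  obtain Y where rows: "\<And>r. r \<in> {1..d} \<Longrightarrow> Omega_mult Y r = 0" and "Y a = 1"
    and fixed: "\<And>b. b \<in> {1..d} \<Longrightarrow> p b = b \<Longrightarrow> b \<noteq> a \<Longrightarrow> Y b = 0"
    using Omega_kernel_vector a by blast
  define y where "y = vec d (\<lambda>i. Y (i + 1))"
  have y: "y \<in> carrier_vec d" by (simp add: y_def)
  have Yy: "Y b = y $ (b - 1)" if "b \<in> {1..d}" for b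
  proof -
    have "b - 1 < d" "b - 1 + 1 = b" using that by auto
    then show ?thesis by (simp add: y_def)
  qed
  have Omega_y: "Omega_mult (\<lambda>b. y $ (b - 1)) r = Omega_mult Y r" for r
    unfolding Omega_mult_def using Yy by simp
  have "Omega_mat d id p *\<^sub>v y = 0\<^sub>v d"
  proof (rule eq_vecI)
    fix i assume "i < dim_vec (0\<^sub>v d)"
    then have i: "i + 1 \<in> {1..d}" by simp
    then have "(Omega_mat d id p *\<^sub>v y) $ (i + 1 - 1) = 0"
      using Omega_mat_mult_vec[OF y i] Omega_y rows by simp
    then show "(Omega_mat d id p *\<^sub>v y) $ i = 0\<^sub>v d $ i" using i by simp
  qed (simp add: Omega_mat_def y_def)
  moreover have "y $ (a - 1) = 1" using Yy[of a] a \<open>Y a = 1\<close> by simp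
  moreover have "\<forall>b\<in>{1..d} - moved - {a}. y $ (b - 1) = 0" using Yy fixed by auto
  ultimately show ?thesis using y by blast
qed

lemma rank_Omega_mat: "rank (Omega_mat d id p) = card moved"
  by (rule rank_eq_card_support[OF Omega_mat_carrier _ Omega_mat_inj_on_supported_moved Omega_mat_kernel_vector])
    auto

section \<open>Two-element orbits\<close>

lemma pi_A_eq: "a \<in> {1..d} \<Longrightarrow> pi_A d id p a = p a"
  using p_in[of a] by (simp add: pi_A_def inv_into_f_f[of id])

lemma orbit_pi_A: "a \<in> {1..d} \<Longrightarrow> orbit (pi_A d id p) a = {a, p a}"
proof
  assume a: "a \<in> {1..d}"
  have step: "pi_A d id p a = p a" "pi_A d id p (p a) = a"
    using pi_A_eq[OF a] pi_A_eq[OF p_in[OF a]] p_involution[OF a] by simp_all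
  show "orbit (pi_A d id p) a \<subseteq> {a, p a}"
  proof
    fix y assume "y \<in> orbit (pi_A d id p) a"
    then show "y \<in> {a, p a}"
      by (induction rule: orbit.induct) (use step in auto)
  qed
  show "{a, p a} \<subseteq> orbit (pi_A d id p) a"
    using orbit.base[of "pi_A d id p" a] orbit.step[OF orbit.base[of "pi_A d id p" a]] step by simp
qed

lemma moved_closed: "a \<in> moved \<Longrightarrow> p a \<in> moved"
  using p_in p_involution by fastforce

lemma two_orbits_eq: "two_orbits d id p = (\<lambda>a. {a, p a}) ` moved"
proof -
  have "card {a, p a} = 2 \<longleftrightarrow> p a \<noteq> a" for a by (cases "p a = a") auto
  then show ?thesis
    unfolding two_orbits_def by (auto simp: orbit_pi_A)
qed

lemma two_orbit_eq: "a \<in> {1..d} \<Longrightarrow> x \<in> {a, p a} \<Longrightarrow> {x, p x} = {a, p a}"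
  using p_involution by auto

lemma two_orbits_disjoint:
  assumes "B \<in> two_orbits d id p" "B' \<in> two_orbits d id p" "B \<noteq> B'"
  shows "B \<inter> B' = {}"
proof (rule ccontr)
  assume "B \<inter> B' \<noteq> {}"
  then obtain x where "x \<in> B" "x \<in> B'" by blast
  with assms(1,2) have "B = {x, p x}" "B' = {x, p x}"
    unfolding two_orbits_eq using two_orbit_eq by blast+
  with assms(3) show False by simp
qed

lemma two_orbits_partition_moved: "\<Union> (two_orbits d id p) = moved"
  unfolding two_orbits_eq using moved_closed by blast

lemma card_moved: "card moved = 2 * card (two_orbits d id p)"
proof -
  have "card B = 2" if "B \<in> two_orbits d id p" for B
    using that by (auto simp: two_orbits_eq)
  then have "2 * card (two_orbits d id p) = card (\<Union> (two_orbits d id p))"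
    by (intro card_partition two_orbits_disjoint) (simp_all add: two_orbits_eq)
  then show ?thesis by (simp add: two_orbits_partition_moved)
qed

theorem transposition_lagrangian: "transposition_lagrangian d id p"
proof -
  let ?T = "two_orbits d id p" and ?v = "v_set d id p"
  have self_inv: "self_inverse d id p"
    unfolding self_inverse_def using pi_A_eq p_in p_involution by simp
  have T: "finite ?T" "\<And>B. B \<in> ?T \<Longrightarrow> B \<noteq> {} \<and> B \<subseteq> moved" "disjoint_family_on (\<lambda>B. B) ?T"
    using two_orbits_partition_moved two_orbits_disjoint
    by (auto simp: two_orbits_eq disjoint_family_on_def)
  have v: "?v = (\<lambda>B. Omega_mat d id p *\<^sub>v e_set d B)"
    by (simp add: v_set_def fun_eq_iff)
  have "moved \<subseteq> {1..d}" by auto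
  note indep = lin_indpt_mult_e_sets[OF Omega_mat_carrier Omega_mat_inj_on_supported_moved T(1,2) this T(3)]
  have inj: "inj_on ?v ?T" and indpt: "lin_indpt (?v ` ?T)"
    unfolding v using indep by simp_all
  have "?v ` ?T \<subseteq> carrier_vec d"
    using Omega_mat_carrier by (auto simp: v e_set_def)
  then have "span_dim (?v ` ?T) = card (?v ` ?T)"
    unfolding span_dim_def using T(1) indpt by (intro dim_span_lin_indpt) simp_all
  also have "\<dots> = card ?T"
    by (rule card_image[OF inj])
  finally have "span_dim (?v ` ?T) = card ?T" .
  moreover have "genus d id p = card ?T"
    unfolding genus_def rank_Omega_mat card_moved by simp
  ultimately show ?thesis
    using self_inv by (simp add: transposition_lagrangian_def)
qed

end

theorem mainTheorem11:
  fixes d :: nat and pi1 :: "nat \<Rightarrow> nat"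
  assumes "block_constructed d pi1"
  shows "transposition_lagrangian d id pi1"
proof -
  obtain ns where perm: "pi1 permutes {1..d}" "pi1 1 = d" "pi1 d = 1"
    and ns: "{2..<2 + sum_list ns} = {2..d - 1}" "blocks_ok pi1 2 ns"
    using assms unfolding block_constructed_def by blast
  obtain start len where "reversal_blocks pi1 {2..<2 + sum_list ns} start len"
    using blocks_ok_reversal_blocks[OF ns(2)] by blast
  moreover have "{2..<2 + sum_list ns} = {2..<d}"
    unfolding ns(1) by (cases d) auto
  ultimately interpret block_permutation d pi1 start len
    using perm by unfold_locales simp_all
  show ?thesis
    by (rule transposition_lagrangian)
qed

end
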